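(* Assume that for some constants $0<a<b$, for all agents $i$, all $t\ge t_0$ and all $k\in\{1,\dots,K\}$, the iterates satisfy $aI_p\preceq\Gamma_{i,t}^k\preceq bI_p$, that $aI_p\preceq\Gamma^*\preceq bI_p$, and that a constant step size $\zeta_{i,t}^k=\zeta>0$ is used. Then after $W$ communication rounds and $K$ optimization iterations at time step $t\ge t_0$, $$\|\Gamma_{i,t}^K-\Gamma^*\|_F\le\beta^{K(t-t_0)}\|\Gamma_{i,t_0}^K-\Gamma^*\|_F+2\sum_{m=1}^K\beta^{K-m}\sum_{l=t_0+1}^t\beta^{K(t-l)}\|S_{i,l}^W-S^*\|_F,$$ where $\beta=\max\{|1-\zeta/a^2|,|1-\zeta/b^2|\}$.
   Context: Let $S^*\in\mathbb R^{p\times p}$ be positive definite and $X_1,X_2,\dots$ i.i.d. samples of $\mathcal N(0,S^* )$, $X_t=(x_{1t},\dots,x_{pt})^T$. There are $n$ agents, the vertices of a connected undirected unweighted graph $\mathcal G_a$; $N_i$ = neighbors of $i$, $\mathcal N_i=N_i\cup\{i\}$. Each agent directly measures some of the variables $x_1,\dots,x_p$; $x_j$ is observable by $i$ if measured by $i$ or a neighbor of $i$; $V_i$ is the diagonal $0/1$ matrix with $V_i(j,j)=1$ iff $x_j$ is observable by $i$. Communication protocol ($W$ rounds per time step): $S_{i,0}^W=0$; at time $t\ge1$, $\chi_{i,t}(j)=x_{jt}$ if $x_j$ observable by $i$, else $0$; with $\Sigma=\sum_{j\in\mathcal N_i}S_{j,t-1}^W$, $S_{i,t}^1=\frac1t((t-1)V_iS_{i,t-1}^WV_i+\chi_{i,t}\chi_{i,t}^T)+\frac1{|\mathcal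 N_i|}(\Sigma-V_i\Sigma V_i)$; for $2\le w\le W$, with $\Sigma_w=\sum_{j\in\mathcal N_i}S_{j,t}^{w-1}$, $S_{i,t}^w=V_iS_{i,t}^{w-1}V_i+\frac1{|\mathcal N_i|}(\Sigma_w-V_i\Sigma_wV_i)$. Optimization: given $\lambda>0$, $t_0,K\in\mathbb N$, and $\mathcal C_\lambda(x)=\min(\max(x,-\lambda),\lambda)$ entrywise: $\Gamma_{i,t_0}^K=S_{i,t_0}^W+\lambda I_p$; for $t>t_0$, $\Gamma_{i,t}^0=\Gamma_{i,t-1}^K$ and for $k=1,\dots,K$, $\Gamma_{i,t}^k=\mathcal C_\lambda(\Gamma_{i,t}^{k-1}-S_{i,t}^W+\zeta_{i,t}^{k-1}(\Gamma_{i,t}^{k-1})^{-1})+S_{i,t}^W$. Let $\Omega^*$ minimize $-\log\det\Omega+\mathrm{tr}(S^*\Omega)+\lambda\sum_{i,j}|\Omega(i,j)|$ over positive definite $\Omega$, and $\Gamma^*=(\Omega^* )^{-1}$. $\|\cdot\|_F$ is the Frobenius norm. *)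

theory Defs
  imports "HOL-Analysis.Analysis" "HOL-Probability.Probability"
begin

type_synonym 'p mat = "real^'p^'p"

definition sym_mat :: "'p::finite mat \<Rightarrow> bool" where
  "sym_mat A \<longleftrightarrow> transpose A = A"

definition pos_def :: "'p::finite mat \<Rightarrow> bool" where
  "pos_def A \<longleftrightarrow> sym_mat A \<and> (\<forall>x. x \<noteq> 0 \<longrightarrow> 0 < x \<bullet> (A *v x))"

definition pos_semidef :: "'p::finite mat \<Rightarrow> bool" where
  "pos_semidef A \<longleftrightarrow> sym_mat A \<and> (\<forall>x. 0 \<le> x \<bullet> (A *v x))"

definition loewner_le :: "'p::finite mat \<Rightarrow> 'p mat \<Rightarrow> bool" where
  "loewner_le A B \<longleftrightarrow> pos_semidef (B - A)"

definition frob_norm :: "'p::finite mat \<Rightarrow> real" where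
  "frob_norm A = sqrt (\<Sum>i\<in>UNIV. \<Sum>j\<in>UNIV. (A $ i $ j)^2)"

definition clip :: "real \<Rightarrow> 'p::finite mat \<Rightarrow> 'p mat" where
  "clip lam A = (\<chi> i j. min (max (A $ i $ j) (- lam)) lam)"

definition outer :: "real^'p \<Rightarrow> real^'p \<Rightarrow> 'p::finite mat" where
  "outer x y = (\<chi> i j. x $ i * y $ j)"

definition glasso_obj :: "'p::finite mat \<Rightarrow> real \<Rightarrow> 'p mat \<Rightarrow> real" where
  "glasso_obj S lam \<Omega> =
     - ln (det \<Omega>) + trace (S ** \<Omega>) + lam * (\<Sum>i\<in>UNIV. \<Sum>j\<in>UNIV. \<bar>\<Omega> $ i $ j\<bar>)"

definition gauss_density :: "'p::finite mat \<Rightarrow> real^'p \<Rightarrow> real" where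
  "gauss_density S x =
     (2 * pi) powr (- real CARD('p) / 2) * det S powr (-1/2)
       * exp (- (x \<bullet> (matrix_inv S *v x)) / 2)"

text \<open>Agents are the elements of a finite type 'n; adj is the edge relation of
  a connected undirected unweighted (simple) graph.\<close>
definition conn_undirected_graph :: "('n::finite \<Rightarrow> 'n \<Rightarrow> bool) \<Rightarrow> bool" where
  "conn_undirected_graph adj \<longleftrightarrow>
     (\<forall>i j. adj i j \<longrightarrow> adj j i) \<and> (\<forall>i. \<not> adj i i) \<and> (\<forall>i j. adj\<^sup>*\<^sup>* i j)"

definition cnbhd :: "('n \<Rightarrow> 'n \<Rightarrow> bool) \<Rightarrow> 'n \<Rightarrow> 'n set" where
  "cnbhd adj i = {j. adj i j} \<union> {i}"

text \<open>meas k j: agent k directly measures variable x_j.\<close>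
definition observable :: "('n \<Rightarrow> 'n \<Rightarrow> bool) \<Rightarrow> ('n \<Rightarrow> 'p \<Rightarrow> bool) \<Rightarrow> 'n \<Rightarrow> 'p \<Rightarrow> bool" where
  "observable adj meas i j \<longleftrightarrow> (\<exists>k\<in>cnbhd adj i. meas k j)"

definition Vmat :: "('n \<Rightarrow> 'n \<Rightarrow> bool) \<Rightarrow> ('n \<Rightarrow> 'p \<Rightarrow> bool) \<Rightarrow> 'n \<Rightarrow> 'p::finite mat" where
  "Vmat adj meas i = (\<chi> r c. if r = c \<and> observable adj meas i r then 1 else 0)"

definition chi_obs :: "('n \<Rightarrow> 'n \<Rightarrow> bool) \<Rightarrow> ('n \<Rightarrow> 'p \<Rightarrow> bool) \<Rightarrow> 'n \<Rightarrow> real^'p \<Rightarrow> real^'p::finite" where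
  "chi_obs adj meas i x = (\<chi> j. if observable adj meas i j then x $ j else 0)"

text \<open>First round at time t (t \<ge> 1), using the previous final matrices Sprev = S^W_{.,t-1}
  and the sample x = X_t.\<close>
definition comm_first ::
  "('n::finite \<Rightarrow> 'n \<Rightarrow> bool) \<Rightarrow> ('n \<Rightarrow> 'p \<Rightarrow> bool) \<Rightarrow> nat \<Rightarrow> real^'p \<Rightarrow> ('n \<Rightarrow> 'p::finite mat) \<Rightarrow> 'n \<Rightarrow> 'p mat" where
  "comm_first adj meas t x Sprev i =
     (let V = Vmat adj meas i; \<Sigma> = (\<Sum>j\<in>cnbhd adj i. Sprev j); c = chi_obs adj meas i x in
      (1 / real t) *\<^sub>R ((real t - 1) *\<^sub>R (V ** Sprev i ** V) + outer c c)
      + (1 / real (card (cnbhd adj i))) *\<^sub>R (\<Sigma> - V ** \<Sigma> ** V))"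

definition comm_round ::
  "('n::finite \<Rightarrow> 'n \<Rightarrow> bool) \<Rightarrow> ('n \<Rightarrow> 'p \<Rightarrow> bool) \<Rightarrow> ('n \<Rightarrow> 'p::finite mat) \<Rightarrow> 'n \<Rightarrow> 'p mat" where
  "comm_round adj meas Scur i =
     (let V = Vmat adj meas i; \<Sigma> = (\<Sum>j\<in>cnbhd adj i. Scur j) in
      V ** Scur i ** V + (1 / real (card (cnbhd adj i))) *\<^sub>R (\<Sigma> - V ** \<Sigma> ** V))"

text \<open>SW adj meas W X t i = S^W_{i,t}, where X t is the sample at time t (t \<ge> 1).\<close>
primrec SW ::
  "('n::finite \<Rightarrow> 'n \<Rightarrow> bool) \<Rightarrow> ('n \<Rightarrow> 'p \<Rightarrow> bool) \<Rightarrow> nat \<Rightarrow> (nat \<Rightarrow> real^'p) \<Rightarrow> nat \<Rightarrow> 'n \<Rightarrow> 'p::finite mat" where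
  "SW adj meas W X 0 = (\<lambda>i. 0)"
| "SW adj meas W X (Suc t) =
     (comm_round adj meas ^^ (W - 1)) (comm_first adj meas (Suc t) (X (Suc t)) (SW adj meas W X t))"

definition opt_step :: "real \<Rightarrow> real \<Rightarrow> 'p::finite mat \<Rightarrow> 'p mat \<Rightarrow> 'p mat" where
  "opt_step lam zeta S G = clip lam (G - S + zeta *\<^sub>R matrix_inv G) + S"

text \<open>GamK d = \<Gamma>^K_{i,t0+d}, for a fixed agent i, given the local sequence Sl t = S^W_{i,t}.\<close>
primrec GamK :: "real \<Rightarrow> real \<Rightarrow> nat \<Rightarrow> nat \<Rightarrow> (nat \<Rightarrow> 'p::finite mat) \<Rightarrow> nat \<Rightarrow> 'p mat" where
  "GamK lam zeta K t0 Sl 0 = Sl t0 + lam *\<^sub>R mat 1"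
| "GamK lam zeta K t0 Sl (Suc d) = (opt_step lam zeta (Sl (t0 + Suc d)) ^^ K) (GamK lam zeta K t0 Sl d)"

text \<open>Gam ... t k = \<Gamma>^k_{i,t} for t > t0 (and \<Gamma>^K_{i,t0} for t \<le> t0).\<close>
definition Gam :: "real \<Rightarrow> real \<Rightarrow> nat \<Rightarrow> nat \<Rightarrow> (nat \<Rightarrow> 'p::finite mat) \<Rightarrow> nat \<Rightarrow> nat \<Rightarrow> 'p mat" where
  "Gam lam zeta K t0 Sl t k =
     (if t \<le> t0 then GamK lam zeta K t0 Sl 0
      else (opt_step lam zeta (Sl t) ^^ k) (GamK lam zeta K t0 Sl (t - t0 - 1)))"

end

theory Submission
  imports Defs
begin

text \<open>
  The estimate is deterministic: it holds for every sample path \<open>\<omega>\<close> and every sequence of local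
  estimates.

  First, \<open>\<Gamma>* = \<Omega>*\<^sup>-\<^sup>1\<close> is a fixed point of the step
  \<open>\<Gamma> \<mapsto> clip\<^sub>\<lambda>(\<Gamma> - S* + \<zeta> \<Gamma>\<^sup>-\<^sup>1) + S*\<close>: this is the subgradient optimality condition of the
  graphical lasso at \<open>\<Omega>*\<close>, obtained by perturbing \<open>\<Omega>*\<close> along the symmetric elementary
  matrices, along which \<open>det\<close> is a quadratic polynomial whose linear coefficient is a cofactor.

  Second, for iterates in \<open>[a I, b I]\<close> one step multiplies the distance to \<open>\<Gamma>*\<close> by at most \<open>\<beta>\<close>,
  up to an error \<open>2 \<parallel>S - S*\<parallel>\<close>: clipping is non-expansive, and \<open>X + \<zeta> X\<^sup>-\<^sup>1 - (Y + \<zeta> Y\<^sup>-\<^sup>1)\<close> is the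
  image of \<open>X - Y\<close> under the self-adjoint map \<open>E \<mapsto> E - \<zeta> X\<^sup>-\<^sup>1 E Y\<^sup>-\<^sup>1\<close>, whose numerical
  range lies in \<open>[1 - \<zeta>/a\<^sup>2, 1 - \<zeta>/b\<^sup>2]\<close> because \<open>tr(F G) \<ge> 0\<close> for positive semidefinite
  \<open>F\<close>, \<open>G\<close>. Unrolling this recursion over the \<open>K\<close> inner and the \<open>t - t\<^sub>0\<close> outer iterations
  gives the bound.
\<close>

section \<open>Matrix algebra\<close>

lemma frob_norm_eq_norm: "frob_norm A = norm A"
  by (simp add: frob_norm_def norm_vec_def L2_set_def sum_nonneg)

lemma matrix_diff_ldistrib: "(A::real^'n^'m) ** (B - C) = A ** B - A ** C"
  by (simp add: vec_eq_iff matrix_matrix_mult_def algebra_simps sum_subtractf)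

lemma matrix_add_rdistrib: "((A::real^'n^'m) + B) ** C = A ** C + B ** C"
  by (simp add: vec_eq_iff matrix_matrix_mult_def algebra_simps sum.distrib)

lemma matrix_diff_rdistrib: "((A::real^'n^'m) - B) ** C = A ** C - B ** C"
  by (simp add: vec_eq_iff matrix_matrix_mult_def algebra_simps sum_subtractf)

lemma transpose_add: "transpose ((A::real^'n^'m) + B) = transpose A + transpose B"
  by (simp add: vec_eq_iff transpose_def)

lemma transpose_diff: "transpose ((A::real^'n^'m) - B) = transpose A - transpose B"
  by (simp add: vec_eq_iff transpose_def)

lemma trace_scaleR: "trace (c *\<^sub>R (A::real^'n^'n)) = c * trace A"
  by (simp add: trace_def sum_distrib_left)

lemma matrix_mult_scaleR_left [simp]: "(c *\<^sub>R (A::real^'n^'m)) ** B = c *\<^sub>R (A ** B)"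
  by (simp add: scalar_matrix_assoc)

lemma matrix_mult_scaleR_right [simp]: "(A::real^'n^'m) ** (c *\<^sub>R B) = c *\<^sub>R (A ** B)"
  by (simp add: vec_eq_iff matrix_matrix_mult_def sum_distrib_left algebra_simps)

lemma scaled_mat1_mult_vec [simp]: "(c *\<^sub>R mat 1 :: real^'n^'n) *v x = c *\<^sub>R x"
  by (metis matrix_vector_mul_lid scaleR_matrix_vector_assoc)

lemma inner_matrix_eq_trace: "(A::real^'n^'m) \<bullet> B = trace (transpose A ** B)"
proof -
  have "A \<bullet> B = (\<Sum>i\<in>UNIV. \<Sum>j\<in>UNIV. A $ i $ j * B $ i $ j)"
    by (simp add: inner_vec_def)
  also have "\<dots> = (\<Sum>j\<in>UNIV. \<Sum>i\<in>UNIV. A $ i $ j * B $ i $ j)"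
    by (rule sum.swap)
  also have "\<dots> = trace (transpose A ** B)"
    by (simp add: trace_def matrix_matrix_mult_def transpose_def)
  finally show ?thesis .
qed

lemma norm_matrix_sq_eq_trace: "(norm (E::real^'n^'m))\<^sup>2 = trace (E ** transpose E)"
  unfolding power2_norm_eq_inner inner_matrix_eq_trace by (rule trace_mul_sym)

lemma sym_mat_nth: "sym_mat A \<Longrightarrow> A $ j $ i = A $ i $ j"
  unfolding sym_mat_def by (metis transpose_def vec_lambda_beta)

lemma sym_mat_inner_commute: "sym_mat M \<Longrightarrow> (M *v u) \<bullet> w = u \<bullet> (M *v w)"
  by (metis dot_lmul_matrix sym_mat_def transpose_matrix_vector)

lemma matrix_inv_mult:
  assumes "invertible (A::real^'n^'n)"
  shows "A ** matrix_inv A = mat 1" "matrix_inv A ** A = mat 1"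
proof -
  have "\<exists>B. A ** B = mat 1 \<and> B ** A = mat 1"
    using assms by (simp add: invertible_def)
  then have "A ** matrix_inv A = mat 1 \<and> matrix_inv A ** A = mat 1"
    unfolding matrix_inv_def by (rule someI_ex)
  then show "A ** matrix_inv A = mat 1" "matrix_inv A ** A = mat 1" by auto
qed

lemma matrix_inv_unique:
  assumes "(A::real^'n^'n) ** B = mat 1"
  shows "matrix_inv A = B"
proof -
  have "invertible A" using assms invertible_right_inverse by blast
  have "matrix_inv A = matrix_inv A ** (A ** B)" using assms by simp
  also have "\<dots> = (matrix_inv A ** A) ** B" by (simp add: matrix_mul_assoc)
  also have "\<dots> = B" by (simp add: matrix_inv_mult[OF \<open>invertible A\<close>])
  finally show ?thesis .
qed

lemma matrix_inv_matrix_inv: "invertible (A::real^'n^'n) \<Longrightarrow> matrix_inv (matrix_inv A) = A"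
  by (rule matrix_inv_unique) (simp add: matrix_inv_mult)

lemma sym_mat_matrix_inv:
  assumes "invertible (A::real^'n^'n)" "sym_mat A"
  shows "sym_mat (matrix_inv A)"
proof -
  have "transpose (matrix_inv A ** A) = mat 1"
    by (simp add: matrix_inv_mult[OF assms(1)])
  then have "A ** transpose (matrix_inv A) = mat 1"
    using assms(2) by (simp add: matrix_transpose_mul sym_mat_def)
  then have "matrix_inv A = transpose (matrix_inv A)"
    by (rule matrix_inv_unique)
  then show ?thesis by (simp add: sym_mat_def)
qed

section \<open>Loewner bounds and positive semidefinite matrices\<close>

lemma scaled_id_loewner_le_iff:
  "loewner_le (a *\<^sub>R mat 1) (X::real^'n^'n) \<longleftrightarrow> sym_mat X \<and> (\<forall>x. a * (norm x)\<^sup>2 \<le> x \<bullet> (X *v x))"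
  unfolding loewner_le_def pos_semidef_def sym_mat_def
  by (simp add: transpose_diff transpose_scalar matrix_vector_mult_diff_rdistrib inner_diff_right
      power2_norm_eq_inner)

lemma loewner_le_scaled_id_iff:
  "loewner_le (X::real^'n^'n) (b *\<^sub>R mat 1) \<longleftrightarrow> sym_mat X \<and> (\<forall>x. x \<bullet> (X *v x) \<le> b * (norm x)\<^sup>2)"
  unfolding loewner_le_def pos_semidef_def sym_mat_def
  by (auto simp: transpose_diff transpose_scalar matrix_vector_mult_diff_rdistrib inner_diff_right
      power2_norm_eq_inner)

lemma pos_semidef_if_scaled_id_loewner_le:
  "0 \<le> a \<Longrightarrow> loewner_le (a *\<^sub>R mat 1) X \<Longrightarrow> pos_semidef X"
  unfolding scaled_id_loewner_le_iff pos_semidef_def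
  by (meson order_trans mult_nonneg_nonneg zero_le_power2)

lemma pos_def_if_scaled_id_loewner_le:
  "0 < a \<Longrightarrow> loewner_le (a *\<^sub>R mat 1) X \<Longrightarrow> pos_def X"
  unfolding scaled_id_loewner_le_iff pos_def_def
  by (meson less_le_trans mult_pos_pos zero_less_norm_iff zero_less_power)

lemma pos_def_invertible:
  assumes "pos_def (M::real^'n^'n)"
  shows "invertible M"
proof -
  have "\<forall>x. M *v x = 0 \<longrightarrow> x = 0"
    using assms unfolding pos_def_def by (metis inner_zero_right less_irrefl)
  then show ?thesis
    using matrix_left_invertible_ker invertible_left_inverse by blast
qed

lemma scaled_id_loewner_le_trans:
  "loewner_le (a *\<^sub>R mat 1) (X::real^'n^'n) \<Longrightarrow> loewner_le X (b *\<^sub>R mat 1) \<Longrightarrow> a \<le> b"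
proof -
  let ?e = "axis undefined 1 :: real^'n"
  assume "loewner_le (a *\<^sub>R mat 1) X" "loewner_le X (b *\<^sub>R mat 1)"
  then have "a * (norm ?e)\<^sup>2 \<le> ?e \<bullet> (X *v ?e)" "?e \<bullet> (X *v ?e) \<le> b * (norm ?e)\<^sup>2"
    unfolding scaled_id_loewner_le_iff loewner_le_scaled_id_iff by blast+
  then show "a \<le> b" by simp
qed

lemma selfadjoint_norm_le:
  fixes T :: "'a::real_inner \<Rightarrow> 'a"
  assumes lin: "linear T" and sa: "\<And>x y. T x \<bullet> y = x \<bullet> T y"
    and rng: "\<And>x. \<bar>x \<bullet> T x\<bar> \<le> \<rho> * (norm x)\<^sup>2"
  shows "norm (T x) \<le> \<rho> * norm x"
proof (cases "T x = 0")
  case True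
  have "0 \<le> (\<rho> * norm x) * norm x"
    using rng[of x] by (simp add: power2_eq_square mult.assoc)
  then show ?thesis
    using True by (cases "x = 0") (auto simp: zero_le_mult_iff)
next
  case False
  \<comment> \<open>polarization: the quadratic form controls the bilinear form\<close>
  have polar: "4 * (T u \<bullet> v) \<le> 2 * \<rho> * ((norm u)\<^sup>2 + (norm v)\<^sup>2)" for u v
  proof -
    have "4 * (T u \<bullet> v) = (u + v) \<bullet> T (u + v) - (u - v) \<bullet> T (u - v)"
      using sa[of u v] sa[of v u] linear_add[OF lin] linear_diff[OF lin]
      by (simp add: inner_add_left inner_add_right inner_diff_left inner_diff_right inner_commute)
    also have "\<dots> \<le> \<rho> * (norm (u + v))\<^sup>2 + \<rho> * (norm (u - v))\<^sup>2"
      using rng[of "u + v"] rng[of "u - v"] by linarith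
    also have "\<dots> = 2 * \<rho> * ((norm u)\<^sup>2 + (norm v)\<^sup>2)"
      by (simp add: power2_norm_eq_inner inner_add_left inner_add_right inner_diff_left
          inner_diff_right inner_commute algebra_simps)
    finally show ?thesis .
  qed
  define c where "c = norm x / norm (T x)"
  have "T x \<bullet> (c *\<^sub>R T x) = norm x * norm (T x)" "norm (c *\<^sub>R T x) = norm x"
    using False by (simp_all add: c_def power2_norm_eq_inner[symmetric] power2_eq_square)
  then have "4 * (norm x * norm (T x)) \<le> 2 * \<rho> * ((norm x)\<^sup>2 + (norm x)\<^sup>2)"
    using polar[of x "c *\<^sub>R T x"] by simp
  then have "norm x * norm (T x) \<le> norm x * (\<rho> * norm x)"
    by (simp add: power2_eq_square algebra_simps)
  moreover have "x \<noteq> 0" using False lin linear_0 by fastforce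
  ultimately show ?thesis by simp
qed

lemma pos_semidef_id: "pos_semidef (mat 1 :: real^'n^'n)"
  unfolding pos_semidef_def sym_mat_def by simp

lemma pos_semidef_congruence:
  assumes "pos_semidef (M::real^'n^'n)"
  shows "pos_semidef (transpose E ** M ** E)"
proof -
  have "sym_mat M" and M_nonneg: "\<And>x. 0 \<le> x \<bullet> (M *v x)"
    using assms unfolding pos_semidef_def by blast+
  then have "transpose (transpose E ** M ** E) = transpose E ** M ** E"
    by (simp add: matrix_transpose_mul sym_mat_def matrix_mul_assoc)
  moreover have "x \<bullet> ((transpose E ** M ** E) *v x) = (E *v x) \<bullet> (M *v (E *v x))" for x
  proof -
    have "x \<bullet> (w v* E) = (E *v x) \<bullet> w" for w
      by (metis dot_lmul_matrix inner_commute)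
    then show ?thesis
      by (simp flip: matrix_vector_mul_assoc)
  qed
  ultimately show ?thesis
    using M_nonneg unfolding pos_semidef_def sym_mat_def by simp
qed

lemma inner_axis_matrix_axis [simp]: "axis i (1::real) \<bullet> ((G::real^'n^'n) *v axis j 1) = G $ i $ j"
  by (simp add: matrix_vector_mult_basis inner_axis' column_def)

lemma pos_semidef_zero_diag:
  fixes G :: "real^'n^'n"
  assumes G: "pos_semidef G" and Gkk: "G $ k $ k = 0"
  shows "G $ k $ j = 0"
proof (rule ccontr)
  assume Gkj: "G $ k $ j \<noteq> 0"
  define s where "s = - (G $ j $ j + 1) / (2 * G $ k $ j)"
  define x where "x = s *\<^sub>R axis k 1 + axis j (1::real)"
  have "G $ j $ k = G $ k $ j"
    using G by (simp add: pos_semidef_def sym_mat_nth)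
  then have "x \<bullet> (G *v x) = 2 * s * G $ k $ j + G $ j $ j"
    using Gkk by (simp add: x_def matrix_vector_right_distrib matrix_vector_mult_scaleR
        inner_add_left inner_add_right algebra_simps)
  also have "\<dots> = -1"
    using Gkj by (simp add: s_def field_simps)
  finally show False
    using G unfolding pos_semidef_def by (metis neg_0_le_iff_le not_one_le_zero)
qed

lemma outer_mult_vec: "outer u w *v x = (w \<bullet> x) *\<^sub>R (u::real^'n)"
  by (simp add: vec_eq_iff outer_def matrix_vector_mult_def inner_vec_def sum_distrib_left
      algebra_simps)

lemma trace_mult_outer: "trace ((F::real^'n^'n) ** outer u w) = w \<bullet> (F *v u)"
  by (simp add: trace_def matrix_matrix_mult_def outer_def inner_vec_def matrix_vector_mult_def
      sum_distrib_left algebra_simps)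

lemma trace_mult_sum: "trace ((F::real^'n^'n) ** (\<Sum>k\<in>S. B k)) = (\<Sum>k\<in>S. trace (F ** B k))"
proof (induction S rule: infinite_finite_induct)
  case infinite
  then show ?case by (simp add: trace_def)
next
  case empty
  show ?case by (simp add: trace_def matrix_matrix_mult_def)
next
  case (insert k S)
  then show ?case by (simp add: matrix_add_ldistrib trace_add)
qed

definition schur_complement :: "real^'n^'n \<Rightarrow> 'n \<Rightarrow> real^'n^'n" where
  "schur_complement G k = G - (1 / G $ k $ k) *\<^sub>R outer (column k G) (column k G)"

lemma schur_complement_nth:
  "schur_complement G k $ i $ j = G $ i $ j - G $ i $ k * G $ j $ k / G $ k $ k"
  by (simp add: schur_complement_def outer_def column_def)

lemma schur_complement_pivot_eq_0:
  assumes "pos_semidef G"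
  shows "schur_complement G k $ i $ k = 0" "schur_complement G k $ k $ i = 0"
proof -
  have "G $ k $ i = G $ i $ k"
    using assms by (simp add: pos_semidef_def sym_mat_nth)
  moreover have "G $ k $ k = 0 \<Longrightarrow> G $ k $ i = 0"
    by (rule pos_semidef_zero_diag[OF assms])
  ultimately show "schur_complement G k $ i $ k = 0" "schur_complement G k $ k $ i = 0"
    by (cases "G $ k $ k = 0"; simp add: schur_complement_nth)+
qed

lemma pos_semidef_schur_complement:
  assumes "pos_semidef G"
  shows "pos_semidef (schur_complement G k)"
proof -
  define g where "g = G $ k $ k"
  define c where "c = column k G"
  have sym: "sym_mat G" and G_nonneg: "\<And>x. 0 \<le> x \<bullet> (G *v x)"
    using assms unfolding pos_semidef_def by blast+
  have "sym_mat (schur_complement G k)"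
    using sym_mat_nth[OF sym]
    by (simp add: sym_mat_def vec_eq_iff transpose_def schur_complement_nth mult.commute)
  moreover have "0 \<le> x \<bullet> (schur_complement G k *v x)" for x
  proof -
    \<comment> \<open>the quadratic form of the Schur complement is that of \<open>G\<close> at a shifted vector\<close>
    define y where "y = x - ((c \<bullet> x) / g) *\<^sub>R axis k 1"
    have cx: "axis k 1 \<bullet> (G *v x) = c \<bullet> x" "x \<bullet> (G *v axis k 1) = c \<bullet> x"
      using sym_mat_inner_commute[OF sym, of "axis k 1" x]
      by (simp_all add: matrix_vector_mult_basis c_def inner_commute)
    have "x \<bullet> (schur_complement G k *v x) = y \<bullet> (G *v y)"
      by (cases "g = 0") (simp_all add: schur_complement_def y_def outer_mult_vec
          matrix_vector_mult_diff_rdistrib matrix_vector_mult_diff_distrib matrix_vector_mult_scaleR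
          scaleR_matrix_vector_assoc[symmetric] inner_diff_left inner_diff_right cx
          inner_commute[of x c] power2_eq_square field_simps flip: c_def g_def)
    then show ?thesis
      using G_nonneg by simp
  qed
  ultimately show ?thesis
    by (simp add: pos_semidef_def)
qed

lemma schur_complement_add_outer:
  fixes G :: "real^'n^'n" and k :: 'n
  assumes "pos_semidef G"
  defines "w \<equiv> (1 / sqrt (G $ k $ k)) *\<^sub>R column k G"
  shows "G = schur_complement G k + outer w w"
proof -
  have "0 \<le> G $ k $ k"
    using assms(1) unfolding pos_semidef_def by (metis inner_axis_matrix_axis)
  then have "outer w w = (1 / G $ k $ k) *\<^sub>R outer (column k G) (column k G)"
    by (simp add: w_def vec_eq_iff outer_def real_sqrt_mult[symmetric])
  then show ?thesis
    by (simp add: schur_complement_def)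
qed

text \<open>Symmetric Gaussian elimination: each step splits off the rank-one part of a pivot column
  and leaves a positive semidefinite Schur complement.\<close>
lemma pos_semidef_sum_outer_on:
  fixes G :: "real^'n^'n"
  shows "finite S \<Longrightarrow> pos_semidef G \<Longrightarrow> (\<forall>i j. G $ i $ j \<noteq> 0 \<longrightarrow> i \<in> S \<and> j \<in> S)
    \<Longrightarrow> \<exists>v. G = (\<Sum>k\<in>S. outer (v k) (v k))"
proof (induction S arbitrary: G rule: finite_induct)
  case empty
  then show ?case by (auto simp: vec_eq_iff)
next
  case (insert k S)
  let ?G' = "schur_complement G k"
  have "\<forall>i j. ?G' $ i $ j \<noteq> 0 \<longrightarrow> i \<in> S \<and> j \<in> S"
  proof (intro allI impI)
    fix i j
    assume ne: "?G' $ i $ j \<noteq> 0"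
    then have "i \<noteq> k" "j \<noteq> k"
      using schur_complement_pivot_eq_0[OF insert.prems(1)] by metis+
    moreover have "G $ i $ j \<noteq> 0 \<or> G $ i $ k \<noteq> 0 \<and> G $ j $ k \<noteq> 0"
      using ne by (auto simp: schur_complement_nth)
    ultimately show "i \<in> S \<and> j \<in> S"
      using insert.prems(2) by blast
  qed
  then obtain v where v: "?G' = (\<Sum>l\<in>S. outer (v l) (v l))"
    using insert.IH pos_semidef_schur_complement[OF insert.prems(1)] by blast
  define w where "w = (1 / sqrt (G $ k $ k)) *\<^sub>R column k G"
  have "(\<Sum>l\<in>S. outer ((v(k := w)) l) ((v(k := w)) l)) = ?G'"
    unfolding v using insert.hyps(2) by (intro sum.cong) auto
  then have "G = (\<Sum>l\<in>insert k S. outer ((v(k := w)) l) ((v(k := w)) l))"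
    using schur_complement_add_outer[OF insert.prems(1), of k] insert.hyps by (simp add: w_def add.commute)
  then show ?case by blast
qed

lemma pos_semidef_sum_outer:
  "pos_semidef (G::real^'n^'n) \<Longrightarrow> \<exists>v::'n \<Rightarrow> real^'n. G = (\<Sum>k\<in>UNIV. outer (v k) (v k))"
  by (rule pos_semidef_sum_outer_on) simp_all

lemma trace_mult_nonneg:
  fixes F G :: "real^'n^'n"
  assumes F: "pos_semidef F" and G: "pos_semidef G"
  shows "0 \<le> trace (F ** G)"
proof -
  obtain v :: "'n \<Rightarrow> real^'n" where "G = (\<Sum>k\<in>UNIV. outer (v k) (v k))"
    using pos_semidef_sum_outer[OF G] by blast
  then have "trace (F ** G) = (\<Sum>k\<in>UNIV. v k \<bullet> (F *v v k))"
    by (simp add: trace_mult_sum trace_mult_outer)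
  also have "\<dots> \<ge> 0"
    using F by (simp add: pos_semidef_def sum_nonneg)
  finally show ?thesis .
qed

lemma trace_mult_mono:
  "pos_semidef (F::real^'n^'n) \<Longrightarrow> loewner_le B C \<Longrightarrow> trace (F ** B) \<le> trace (F ** C)"
  using trace_mult_nonneg[of F "C - B"]
  by (simp add: loewner_le_def matrix_diff_ldistrib trace_sub)

lemma inner_sandwich_bounds:
  fixes A B E :: "real^'n^'n"
  assumes p: "0 \<le> p"
    and A: "loewner_le (p *\<^sub>R mat 1) A" "loewner_le A (q *\<^sub>R mat 1)"
    and B: "loewner_le (p *\<^sub>R mat 1) B" "loewner_le B (q *\<^sub>R mat 1)"
  shows "p\<^sup>2 * (norm E)\<^sup>2 \<le> E \<bullet> (A ** E ** B) \<and> E \<bullet> (A ** E ** B) \<le> q\<^sup>2 * (norm E)\<^sup>2"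
proof -
  have q: "0 \<le> q"
    using p scaled_id_loewner_le_trans[OF A] by linarith
  define F where "F = transpose E ** A ** E"
  define P where "P = E ** transpose E"
  have F_psd: "pos_semidef F"
    unfolding F_def by (rule pos_semidef_congruence[OF pos_semidef_if_scaled_id_loewner_le[OF p A(1)]])
  have P_psd: "pos_semidef P"
    using pos_semidef_congruence[OF pos_semidef_id, of "transpose E"] by (simp add: P_def)
  have "trace F = trace (E ** (transpose E ** A))"
    unfolding F_def by (rule trace_mul_sym)
  then have trace_F: "trace F = trace (P ** A)"
    by (simp add: P_def matrix_mul_assoc)
  have F_lo: "p * trace P \<le> trace F" and F_hi: "trace F \<le> q * trace P"
    using trace_mult_mono[OF P_psd A(1)] trace_mult_mono[OF P_psd A(2)]
    by (simp_all add: trace_F trace_scaleR)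
  have inner_eq: "E \<bullet> (A ** E ** B) = trace (F ** B)"
    by (simp add: inner_matrix_eq_trace F_def matrix_mul_assoc)
  have norm_eq: "(norm E)\<^sup>2 = trace P"
    by (simp add: P_def norm_matrix_sq_eq_trace)
  have "p\<^sup>2 * (norm E)\<^sup>2 = p * (p * trace P)"
    unfolding norm_eq by (simp add: power2_eq_square)
  also have "\<dots> \<le> p * trace F"
    by (rule mult_left_mono[OF F_lo p])
  also have "\<dots> \<le> E \<bullet> (A ** E ** B)"
    using trace_mult_mono[OF F_psd B(1)] by (simp add: inner_eq trace_scaleR)
  finally have lower: "p\<^sup>2 * (norm E)\<^sup>2 \<le> E \<bullet> (A ** E ** B)" .
  have "E \<bullet> (A ** E ** B) \<le> q * trace F"
    using trace_mult_mono[OF F_psd B(2)] by (simp add: inner_eq trace_scaleR)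
  also have "\<dots> \<le> q * (q * trace P)"
    by (rule mult_left_mono[OF F_hi q])
  also have "\<dots> = q\<^sup>2 * (norm E)\<^sup>2"
    unfolding norm_eq by (simp add: power2_eq_square)
  finally show ?thesis
    using lower by blast
qed

lemma norm_sub_midpoint_le:
  fixes X :: "real^'n^'n"
  assumes lo: "loewner_le (a *\<^sub>R mat 1) X" and hi: "loewner_le X (b *\<^sub>R mat 1)"
  shows "norm (X *v y - ((a + b) / 2) *\<^sub>R y) \<le> ((b - a) / 2) * norm y"
proof -
  let ?c = "(a + b) / 2"
  have sym: "sym_mat X" and X_lo: "\<And>y. a * (norm y)\<^sup>2 \<le> y \<bullet> (X *v y)"
    and X_hi: "\<And>y. y \<bullet> (X *v y) \<le> b * (norm y)\<^sup>2"
    using lo hi unfolding scaled_id_loewner_le_iff loewner_le_scaled_id_iff by blast+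
  show ?thesis
  proof (rule selfadjoint_norm_le[where T = "\<lambda>y. X *v y - ?c *\<^sub>R y"])
    show "linear (\<lambda>y. X *v y - ?c *\<^sub>R y)"
      by (rule linearI) (simp_all add: matrix_vector_right_distrib matrix_vector_mult_scaleR algebra_simps)
    show "(X *v u - ?c *\<^sub>R u) \<bullet> w = u \<bullet> (X *v w - ?c *\<^sub>R w)" for u w
      using sym_mat_inner_commute[OF sym] by (simp add: inner_diff_left inner_diff_right)
    show "\<bar>u \<bullet> (X *v u - ?c *\<^sub>R u)\<bar> \<le> (b - a) / 2 * (norm u)\<^sup>2" for u
    proof -
      have "u \<bullet> (X *v u - ?c *\<^sub>R u) = u \<bullet> (X *v u) - (a * (norm u)\<^sup>2 + b * (norm u)\<^sup>2) / 2"
        by (simp add: inner_diff_right power2_norm_eq_inner algebra_simps)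
      moreover have "(b - a) / 2 * (norm u)\<^sup>2 = (b * (norm u)\<^sup>2 - a * (norm u)\<^sup>2) / 2"
        by (simp add: algebra_simps)
      ultimately show ?thesis
        using X_lo[of u] X_hi[of u] unfolding abs_le_iff by argo
    qed
  qed
qed

lemma norm_mult_vec_sq_bounds:
  fixes X :: "real^'n^'n"
  assumes a: "0 < a" and lo: "loewner_le (a *\<^sub>R mat 1) X" and hi: "loewner_le X (b *\<^sub>R mat 1)"
  shows "a * (y \<bullet> (X *v y)) \<le> (norm (X *v y))\<^sup>2 \<and> (norm (X *v y))\<^sup>2 \<le> b * (y \<bullet> (X *v y))"
proof
  let ?q = "y \<bullet> (X *v y)" and ?z = "X *v y"
  have q_lo: "a * (norm y)\<^sup>2 \<le> ?q" and q_hi: "?q \<le> b * (norm y)\<^sup>2"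
    using lo hi unfolding scaled_id_loewner_le_iff loewner_le_scaled_id_iff by blast+
  have cs: "?q \<le> norm y * norm ?z"
    by (rule norm_cauchy_schwarz)
  have "a * norm y \<le> norm ?z"
  proof (cases "y = 0")
    case False
    have "norm y * (a * norm y) \<le> norm y * norm ?z"
      using q_lo cs by (simp add: power2_eq_square algebra_simps)
    then show ?thesis using False by simp
  qed simp
  have "a * ?q \<le> (a * norm y) * norm ?z"
    using cs a by simp
  also have "\<dots> \<le> (norm ?z)\<^sup>2"
    using \<open>a * norm y \<le> norm ?z\<close> by (simp add: mult_right_mono power2_eq_square)
  finally show "a * ?q \<le> (norm ?z)\<^sup>2" .
  \<comment> \<open>expand \<open>\<parallel>X y - c y\<parallel>\<^sup>2 \<le> r\<^sup>2 \<parallel>y\<parallel>\<^sup>2\<close>, \<open>c\<close> and \<open>r\<close> the midpoint and radius of \<open>[a, b]\<close>\<close>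
  have "(norm (?z - ((a + b) / 2) *\<^sub>R y))\<^sup>2 \<le> ((b - a) / 2)\<^sup>2 * (norm y)\<^sup>2"
    using norm_sub_midpoint_le[OF lo hi, of y] by (simp add: power_mono flip: power_mult_distrib)
  moreover have "(norm (?z - ((a + b) / 2) *\<^sub>R y))\<^sup>2
      = (norm ?z)\<^sup>2 - (a * ?q + b * ?q) + ((a + b) / 2)\<^sup>2 * (norm y)\<^sup>2"
    unfolding power2_norm_eq_inner
    by (simp add: inner_diff_left inner_diff_right inner_commute power2_eq_square field_simps)
  moreover have "((a + b) / 2)\<^sup>2 * (norm y)\<^sup>2 = a * b * (norm y)\<^sup>2 + ((b - a) / 2)\<^sup>2 * (norm y)\<^sup>2"
    by (simp add: power2_eq_square field_simps)
  moreover have "a * ?q \<le> a * b * (norm y)\<^sup>2"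
    using q_hi a by (simp add: mult.assoc)
  ultimately show "(norm ?z)\<^sup>2 \<le> b * ?q"
    by argo
qed

lemma matrix_inv_loewner_bounds:
  fixes X :: "real^'n^'n"
  assumes a: "0 < a" and lo: "loewner_le (a *\<^sub>R mat 1) X" and hi: "loewner_le X (b *\<^sub>R mat 1)"
  shows "loewner_le ((1 / b) *\<^sub>R mat 1) (matrix_inv X) \<and> loewner_le (matrix_inv X) ((1 / a) *\<^sub>R mat 1)"
proof -
  have inv: "invertible X"
    using pos_def_invertible pos_def_if_scaled_id_loewner_le[OF a lo] by blast
  have b: "0 < b"
    using a scaled_id_loewner_le_trans[OF lo hi] by linarith
  have "(1 / b) * (norm z)\<^sup>2 \<le> z \<bullet> (matrix_inv X *v z) \<and> z \<bullet> (matrix_inv X *v z) \<le> (1 / a) * (norm z)\<^sup>2"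
    for z
  proof -
    define y where "y = matrix_inv X *v z"
    have "z = X *v y"
      by (simp add: y_def matrix_vector_mul_assoc matrix_inv_mult[OF inv])
    moreover have "z \<bullet> (matrix_inv X *v z) = y \<bullet> z"
      by (simp add: y_def inner_commute)
    ultimately show ?thesis
      using norm_mult_vec_sq_bounds[OF a lo hi, of y] a b by (simp add: field_simps)
  qed
  then show ?thesis
    using sym_mat_matrix_inv[OF inv] lo
    unfolding scaled_id_loewner_le_iff loewner_le_scaled_id_iff by blast
qed

section \<open>The step map is a contraction up to the estimation error\<close>

definition contraction_rate :: "real \<Rightarrow> real \<Rightarrow> real \<Rightarrow> real" where
  "contraction_rate a b \<zeta> = max \<bar>1 - \<zeta> / a\<^sup>2\<bar> \<bar>1 - \<zeta> / b\<^sup>2\<bar>"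

lemma abs_le_max_abs_mult:
  fixes \<alpha> \<gamma> x n :: real
  assumes "\<alpha> * n \<le> x" "x \<le> \<gamma> * n" "0 \<le> n"
  shows "\<bar>x\<bar> \<le> max \<bar>\<alpha>\<bar> \<bar>\<gamma>\<bar> * n"
proof -
  have "- (max \<bar>\<alpha>\<bar> \<bar>\<gamma>\<bar> * n) \<le> \<alpha> * n"
    using mult_right_mono[of "- max \<bar>\<alpha>\<bar> \<bar>\<gamma>\<bar>" \<alpha> n] assms(3) by simp
  moreover have "\<gamma> * n \<le> max \<bar>\<alpha>\<bar> \<bar>\<gamma>\<bar> * n"
    using mult_right_mono[of \<gamma> "max \<bar>\<alpha>\<bar> \<bar>\<gamma>\<bar>" n] assms(3) by simp
  ultimately show ?thesis
    using assms(1,2) by (simp add: abs_le_iff)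
qed

lemma inner_sandwich_commute:
  assumes "sym_mat A" "sym_mat B"
  shows "(A ** E ** B) \<bullet> F = E \<bullet> (A ** F ** B)"
proof -
  have "(A ** E ** B) \<bullet> F = trace (B ** (transpose E ** A ** F))"
    using assms by (simp add: inner_matrix_eq_trace matrix_transpose_mul sym_mat_def matrix_mul_assoc)
  also have "\<dots> = trace ((transpose E ** A ** F) ** B)"
    by (rule trace_mul_sym)
  finally show ?thesis
    by (simp add: inner_matrix_eq_trace matrix_mul_assoc)
qed

lemma inner_sub_scaled_sandwich_le:
  fixes A B E :: "real^'n^'n"
  assumes b: "0 < b" and \<zeta>: "0 \<le> \<zeta>"
    and A: "loewner_le ((1 / b) *\<^sub>R mat 1) A" "loewner_le A ((1 / a) *\<^sub>R mat 1)"
    and B: "loewner_le ((1 / b) *\<^sub>R mat 1) B" "loewner_le B ((1 / a) *\<^sub>R mat 1)"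
  shows "\<bar>E \<bullet> (E - \<zeta> *\<^sub>R (A ** E ** B))\<bar> \<le> contraction_rate a b \<zeta> * (norm E)\<^sup>2"
proof -
  have "(1 / b)\<^sup>2 * (norm E)\<^sup>2 \<le> E \<bullet> (A ** E ** B)" "E \<bullet> (A ** E ** B) \<le> (1 / a)\<^sup>2 * (norm E)\<^sup>2"
    using inner_sandwich_bounds[OF _ A B, of E] b by simp_all
  then have "\<zeta> / b\<^sup>2 * (norm E)\<^sup>2 \<le> \<zeta> * (E \<bullet> (A ** E ** B))"
    "\<zeta> * (E \<bullet> (A ** E ** B)) \<le> \<zeta> / a\<^sup>2 * (norm E)\<^sup>2"
    using mult_left_mono[OF _ \<zeta>] by (fastforce simp: power_divide)+
  moreover have "E \<bullet> (E - \<zeta> *\<^sub>R (A ** E ** B)) = (norm E)\<^sup>2 - \<zeta> * (E \<bullet> (A ** E ** B))"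
    by (simp add: inner_diff_right power2_norm_eq_inner)
  ultimately show ?thesis
    unfolding contraction_rate_def
    by (intro abs_le_max_abs_mult) (simp_all add: algebra_simps)
qed

text \<open>\<open>X + \<zeta> X\<^sup>-\<^sup>1 - (Y + \<zeta> Y\<^sup>-\<^sup>1) = T (X - Y)\<close> for the self-adjoint map
  \<open>T E = E - \<zeta> X\<^sup>-\<^sup>1 E Y\<^sup>-\<^sup>1\<close>.\<close>
lemma norm_add_scaled_inverse_diff_le:
  fixes X Y :: "real^'n^'n"
  assumes a: "0 < a" and \<zeta>: "0 \<le> \<zeta>"
    and X: "loewner_le (a *\<^sub>R mat 1) X" "loewner_le X (b *\<^sub>R mat 1)"
    and Y: "loewner_le (a *\<^sub>R mat 1) Y" "loewner_le Y (b *\<^sub>R mat 1)"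
  shows "norm ((X + \<zeta> *\<^sub>R matrix_inv X) - (Y + \<zeta> *\<^sub>R matrix_inv Y))
    \<le> contraction_rate a b \<zeta> * norm (X - Y)"
proof -
  define A where "A = matrix_inv X"
  define B where "B = matrix_inv Y"
  have b: "0 < b"
    using a scaled_id_loewner_le_trans[OF X] by linarith
  have A_bounds: "loewner_le ((1 / b) *\<^sub>R mat 1) A" "loewner_le A ((1 / a) *\<^sub>R mat 1)"
    and B_bounds: "loewner_le ((1 / b) *\<^sub>R mat 1) B" "loewner_le B ((1 / a) *\<^sub>R mat 1)"
    using matrix_inv_loewner_bounds[OF a X] matrix_inv_loewner_bounds[OF a Y]
    by (simp_all add: A_def B_def)
  have "invertible X" "invertible Y"
    using pos_def_invertible pos_def_if_scaled_id_loewner_le a X(1) Y(1) by blast+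
  then have ADB: "A ** (X - Y) ** B = B - A"
    by (simp add: A_def B_def matrix_diff_ldistrib matrix_diff_rdistrib matrix_inv_mult
        flip: matrix_mul_assoc)
  have diff: "(X + \<zeta> *\<^sub>R A) - (Y + \<zeta> *\<^sub>R B) = (X - Y) - \<zeta> *\<^sub>R (A ** (X - Y) ** B)"
    unfolding ADB by (simp add: algebra_simps)
  have "sym_mat A" "sym_mat B"
    using A_bounds B_bounds unfolding scaled_id_loewner_le_iff by blast+
  then have "norm ((X - Y) - \<zeta> *\<^sub>R (A ** (X - Y) ** B)) \<le> contraction_rate a b \<zeta> * norm (X - Y)"
    using inner_sub_scaled_sandwich_le[OF b \<zeta> A_bounds B_bounds]
    by (intro selfadjoint_norm_le[where T = "\<lambda>E. E - \<zeta> *\<^sub>R (A ** E ** B)"] linearI)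
      (simp_all add: matrix_add_ldistrib matrix_add_rdistrib algebra_simps inner_diff_left
        inner_diff_right inner_sandwich_commute)
  then show ?thesis
    by (simp only: diff flip: A_def B_def)
qed

lemma clip_dist_le: "norm (clip l U - clip l (V::real^'n^'n)) \<le> norm (U - V)"
proof -
  have "frob_norm (clip l U - clip l V) \<le> frob_norm (U - V)"
    unfolding frob_norm_def
  proof (intro real_sqrt_le_mono sum_mono)
    fix i j
    have "\<bar>(clip l U - clip l V) $ i $ j\<bar> \<le> \<bar>(U - V) $ i $ j\<bar>"
      by (auto simp: clip_def min_def max_def abs_le_iff)
    then show "((clip l U - clip l V) $ i $ j)\<^sup>2 \<le> ((U - V) $ i $ j)\<^sup>2"
      by (metis abs_ge_zero power2_abs power_mono)
  qed
  then show ?thesis by (simp add: frob_norm_eq_norm)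
qed

lemma opt_step_dist_le:
  fixes G Gs S Ss :: "real^'n^'n"
  assumes a: "0 < a" and \<zeta>: "0 \<le> \<zeta>"
    and G: "loewner_le (a *\<^sub>R mat 1) G" "loewner_le G (b *\<^sub>R mat 1)"
    and Gs: "loewner_le (a *\<^sub>R mat 1) Gs" "loewner_le Gs (b *\<^sub>R mat 1)"
    and fixed: "opt_step lam \<zeta> Ss Gs = Gs"
  shows "norm (opt_step lam \<zeta> S G - Gs) \<le> contraction_rate a b \<zeta> * norm (G - Gs) + 2 * norm (S - Ss)"
proof -
  define U where "U = G - S + \<zeta> *\<^sub>R matrix_inv G"
  define V where "V = Gs - Ss + \<zeta> *\<^sub>R matrix_inv Gs"
  have "opt_step lam \<zeta> S G - Gs = (clip lam U - clip lam V) + (S - Ss)"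
    using fixed by (metis U_def V_def opt_step_def add_diff_add)
  then have "norm (opt_step lam \<zeta> S G - Gs) \<le> norm (U - V) + norm (S - Ss)"
    by (metis norm_triangle_le add_right_mono clip_dist_le)
  also have "U - V = ((G + \<zeta> *\<^sub>R matrix_inv G) - (Gs + \<zeta> *\<^sub>R matrix_inv Gs)) - (S - Ss)"
    by (simp add: U_def V_def algebra_simps)
  also have "norm \<dots> \<le> norm ((G + \<zeta> *\<^sub>R matrix_inv G) - (Gs + \<zeta> *\<^sub>R matrix_inv Gs)) + norm (S - Ss)"
    by (rule norm_triangle_ineq4)
  also have "\<dots> \<le> contraction_rate a b \<zeta> * norm (G - Gs) + norm (S - Ss)"
    using norm_add_scaled_inverse_diff_le[OF a \<zeta> G Gs] by simp
  finally show ?thesis by simp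
qed

section \<open>Optimality conditions of the graphical lasso\<close>

lemma det_pos_if_pos_def:
  fixes M :: "real^'n^'n"
  assumes M: "pos_def M"
  shows "0 < det M"
proof (rule ccontr)
  assume "\<not> 0 < det M"
  define f where "f s = det (s *\<^sub>R M + (1 - s) *\<^sub>R mat 1)" for s
  have "continuous_on {0..1} f"
    unfolding f_def det_def by (intro continuous_intros)
  moreover have "f 0 = 1" "f 1 = det M"
    by (simp_all add: f_def)
  ultimately obtain s where s: "0 \<le> s" "s \<le> 1" "f s = 0"
    using IVT2'[of f 1 0 0] \<open>\<not> 0 < det M\<close> by auto
  \<comment> \<open>but the segment from \<open>mat 1\<close> to \<open>M\<close> consists of positive definite, hence invertible, matrices\<close>
  have "pos_def (s *\<^sub>R M + (1 - s) *\<^sub>R mat 1)"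
    unfolding pos_def_def
  proof (intro conjI allI impI)
    show "sym_mat (s *\<^sub>R M + (1 - s) *\<^sub>R mat 1)"
      using M unfolding pos_def_def sym_mat_def by (simp add: transpose_add transpose_scalar)
    fix x :: "real^'n"
    assume "x \<noteq> 0"
    then have "0 < x \<bullet> (M *v x)" "0 < x \<bullet> x"
      using M unfolding pos_def_def by auto
    then have "0 < s * (x \<bullet> (M *v x)) + (1 - s) * (x \<bullet> x)"
      using s(1,2) by (cases "s = 0") (auto intro: add_pos_nonneg)
    then show "0 < x \<bullet> ((s *\<^sub>R M + (1 - s) *\<^sub>R mat 1) *v x)"
      by (simp add: matrix_vector_mult_add_rdistrib scaleR_matrix_vector_assoc[symmetric] inner_add_right)
  qed
  then show False
    using s(3) pos_def_invertible invertible_det_nz by (metis f_def)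
qed

definition row_upd :: "real^'n^'n \<Rightarrow> 'n \<Rightarrow> real^'n \<Rightarrow> real^'n^'n" where
  "row_upd M k v = (\<chi> r. if r = k then v else M $ r)"

lemma det_row_upd_add:
  "det (row_upd M k (M $ k + t *\<^sub>R v)) = det M + t * det (row_upd M k v)"
proof -
  have scale: "t *\<^sub>R v = t *s v"
    by (simp add: vec_eq_iff)
  have "det (\<chi> r. if r = k then M $ k + t *s v else M $ r)
      = det (\<chi> r. if r = k then M $ k else M $ r) + det (\<chi> r. if r = k then t *s v else M $ r)"
    by (rule det_row_add)
  moreover have "(\<chi> r. if r = k then M $ k else M $ r) = M"
    by (simp add: vec_eq_iff)
  moreover have "det (\<chi> r. if r = k then t *s v else M $ r) = t * det (\<chi> r. if r = k then v else M $ r)"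
    by (rule det_row_mul)
  ultimately show ?thesis
    unfolding row_upd_def scale by simp
qed

lemma det_row_upd_axis:
  fixes M :: "real^'n^'n"
  assumes sym: "sym_mat M" and inv: "invertible M"
  shows "det (row_upd M k (axis l 1)) = det M * matrix_inv M $ k $ l"
proof -
  define x where "x = matrix_inv M *v axis l 1"
  have "M *v x = axis l 1"
    by (simp add: x_def matrix_vector_mul_assoc matrix_inv_mult[OF inv])
  then have T: "transpose (row_upd M k (axis l 1)) = (\<chi> i j. if j = k then (M *v x) $ i else M $ i $ j)"
    using sym_mat_nth[OF sym] by (simp add: vec_eq_iff transpose_def row_upd_def)
  have "det (row_upd M k (axis l 1)) = det (transpose (row_upd M k (axis l 1)))"
    by (rule det_transpose[symmetric])
  also have "\<dots> = x $ k * det M"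
    unfolding T by (rule cramer_lemma)
  finally show ?thesis
    by (simp add: x_def matrix_vector_mult_basis column_def)
qed

definition sym_basis :: "'n \<Rightarrow> 'n \<Rightarrow> real^'n^'n" where
  "sym_basis i j = (if i = j then outer (axis i 1) (axis i 1)
     else outer (axis i 1) (axis j 1) + outer (axis j 1) (axis i 1))"

lemma sym_basis_nth:
  "sym_basis i j $ k $ l = (if k = i \<and> l = j \<or> k = j \<and> l = i then 1 else 0)"
  by (auto simp: sym_basis_def outer_def axis_def)

lemma pos_def_add_sym_basis:
  fixes \<Omega> :: "real^'n^'n"
  assumes sym: "sym_mat \<Omega>" and \<Omega>: "loewner_le (m *\<^sub>R mat 1) \<Omega>" and t: "\<bar>t\<bar> < m / 2"
  shows "pos_def (\<Omega> + t *\<^sub>R sym_basis i j)"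
  unfolding pos_def_def
proof (intro conjI allI impI)
  show "sym_mat (\<Omega> + t *\<^sub>R sym_basis i j)"
    using sym_mat_nth[OF sym] by (auto simp: sym_mat_def vec_eq_iff transpose_def sym_basis_nth)
  fix x :: "real^'n"
  assume "x \<noteq> 0"
  have entries: "\<bar>x $ k * x $ l\<bar> \<le> (norm x)\<^sup>2" for k l
    unfolding abs_mult power2_eq_square by (intro mult_mono component_le_norm_cart) auto
  have "x \<bullet> (sym_basis i j *v x) = (if i = j then x $ i * x $ i else 2 * (x $ i * x $ j))"
    by (simp add: sym_basis_def outer_mult_vec matrix_vector_mult_add_rdistrib inner_add_right
        inner_axis inner_axis')
  then have "\<bar>x \<bullet> (sym_basis i j *v x)\<bar> \<le> 2 * (norm x)\<^sup>2"
    using order_trans[OF entries[of i i], of "2 * (norm x)\<^sup>2"] entries[of i j] by (auto simp: abs_mult)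
  then have "\<bar>t * (x \<bullet> (sym_basis i j *v x))\<bar> \<le> \<bar>t\<bar> * (2 * (norm x)\<^sup>2)"
    unfolding abs_mult by (intro mult_left_mono) auto
  also have "\<dots> < m * (norm x)\<^sup>2"
    using t \<open>x \<noteq> 0\<close> by (simp add: mult.assoc[symmetric])
  finally have "\<bar>t * (x \<bullet> (sym_basis i j *v x))\<bar> < m * (norm x)\<^sup>2" .
  moreover have "m * (norm x)\<^sup>2 \<le> x \<bullet> (\<Omega> *v x)"
    using \<Omega> unfolding scaled_id_loewner_le_iff by blast
  ultimately show "0 < x \<bullet> ((\<Omega> + t *\<^sub>R sym_basis i j) *v x)"
    by (simp add: matrix_vector_mult_add_rdistrib scaleR_matrix_vector_assoc[symmetric] inner_add_right)
qed

text \<open>\<open>sym_basis i j\<close> has rank at most two, so the determinant along it is a quadratic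
  polynomial whose linear coefficient is a cofactor.\<close>
lemma det_add_sym_basis:
  fixes \<Omega> :: "real^'n^'n"
  assumes sym: "sym_mat \<Omega>" and inv: "invertible \<Omega>"
  obtains c where "\<And>t. det (\<Omega> + t *\<^sub>R sym_basis i j)
    = det \<Omega> * (1 + (if i = j then 1 else 2) * matrix_inv \<Omega> $ i $ j * t) + c * t\<^sup>2"
proof (cases "i = j")
  case True
  have "\<Omega> + t *\<^sub>R sym_basis i j = row_upd \<Omega> i (\<Omega> $ i + t *\<^sub>R axis i 1)" for t
    using True by (auto simp: vec_eq_iff sym_basis_nth row_upd_def axis_def)
  then show ?thesis
    using True that[of 0] by (simp add: det_row_upd_add det_row_upd_axis[OF sym inv] algebra_simps)
next
  case False
  have sym_inv: "matrix_inv \<Omega> $ j $ i = matrix_inv \<Omega> $ i $ j"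
    using sym_mat_nth[OF sym_mat_matrix_inv[OF inv sym]] .
  define M2 where "M2 = row_upd \<Omega> j (axis i 1)"
  have "det (\<Omega> + t *\<^sub>R sym_basis i j)
    = det \<Omega> * (1 + 2 * matrix_inv \<Omega> $ i $ j * t) + det (row_upd M2 i (axis j 1)) * t\<^sup>2" for t
  proof -
    define M1 where "M1 = row_upd \<Omega> i (\<Omega> $ i + t *\<^sub>R axis j 1)"
    have "\<Omega> + t *\<^sub>R sym_basis i j = row_upd M1 j (M1 $ j + t *\<^sub>R axis i 1)"
      using False by (auto simp: vec_eq_iff sym_basis_nth row_upd_def axis_def M1_def)
    moreover have "row_upd M1 j (axis i 1) = row_upd M2 i (M2 $ i + t *\<^sub>R axis j 1)"
      using False by (auto simp: vec_eq_iff row_upd_def M1_def M2_def)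
    ultimately have "det (\<Omega> + t *\<^sub>R sym_basis i j)
        = det M1 + t * det (row_upd M2 i (M2 $ i + t *\<^sub>R axis j 1))"
      by (simp only: det_row_upd_add)
    also have "det M1 = det \<Omega> + t * (det \<Omega> * matrix_inv \<Omega> $ i $ j)"
      unfolding M1_def det_row_upd_add det_row_upd_axis[OF sym inv] ..
    also have "det (row_upd M2 i (M2 $ i + t *\<^sub>R axis j 1))
        = det \<Omega> * matrix_inv \<Omega> $ j $ i + t * det (row_upd M2 i (axis j 1))"
      unfolding det_row_upd_add unfolding M2_def det_row_upd_axis[OF sym inv] ..
    finally show ?thesis
      using sym_inv by (simp add: power2_eq_square algebra_simps)
  qed
  then show ?thesis
    using False that by auto
qed

lemma trace_mult_sym_basis:
  "sym_mat S \<Longrightarrow> trace (S ** sym_basis i j) = (if i = j then 1 else 2) * S $ i $ j"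
  by (auto simp: sym_basis_def trace_mult_outer matrix_add_ldistrib trace_add sym_mat_nth)

lemma sum_abs_add_sym_basis:
  fixes \<Omega> :: "real^'n^'n"
  assumes sym: "sym_mat \<Omega>"
  shows "(\<Sum>k\<in>UNIV. \<Sum>l\<in>UNIV. \<bar>(\<Omega> + t *\<^sub>R sym_basis i j) $ k $ l\<bar>)
    = (\<Sum>k\<in>UNIV. \<Sum>l\<in>UNIV. \<bar>\<Omega> $ k $ l\<bar>) + (if i = j then 1 else 2) * (\<bar>\<Omega> $ i $ j + t\<bar> - \<bar>\<Omega> $ i $ j\<bar>)"
proof -
  define d where "d = \<bar>\<Omega> $ i $ j + t\<bar> - \<bar>\<Omega> $ i $ j\<bar>"
  have delta: "(\<Sum>k\<in>UNIV. \<Sum>l\<in>UNIV. if k = i' \<and> l = j' then e else 0) = (e::real)" for i' j' :: 'n and e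
  proof -
    have "(\<Sum>l\<in>UNIV. if k = i' \<and> l = j' then e else 0) = (if k = i' then e else 0)" for k
      by (cases "k = i'") simp_all
    then show ?thesis by simp
  qed
  have "\<bar>(\<Omega> + t *\<^sub>R sym_basis i j) $ k $ l\<bar> = \<bar>\<Omega> $ k $ l\<bar>
      + (if k = i \<and> l = j then d else 0) + (if k = j \<and> l = i then (if i = j then 0 else d) else 0)" for k l
    using sym_mat_nth[OF sym, of i j]
    by (cases "k = i"; cases "l = j"; cases "k = j"; cases "l = i") (simp_all add: sym_basis_nth d_def)
  then show ?thesis
    by (simp add: sum.distrib delta d_def)
qed

lemma deriv_nonneg_if_right_local_min:
  fixes f :: "real \<Rightarrow> real"
  assumes "(f has_real_derivative D) (at x)" "0 < \<delta>"
    and "\<And>h. 0 < h \<Longrightarrow> h < \<delta> \<Longrightarrow> f x \<le> f (x + h)"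
  shows "0 \<le> D"
proof (rule ccontr)
  assume "\<not> 0 \<le> D"
  then obtain d where "0 < d" and dec: "\<And>h. 0 < h \<Longrightarrow> h < d \<Longrightarrow> f (x + h) < f x"
    using DERIV_neg_dec_right[OF assms(1)] by force
  then have "0 < min d \<delta> / 2" "min d \<delta> / 2 < d" "min d \<delta> / 2 < \<delta>"
    using assms(2) by auto
  then show False
    using dec assms(3) by (meson not_le)
qed

lemma deriv_nonpos_if_left_local_min:
  fixes f :: "real \<Rightarrow> real"
  assumes "(f has_real_derivative D) (at x)" "0 < \<delta>"
    and "\<And>h. 0 < h \<Longrightarrow> h < \<delta> \<Longrightarrow> f x \<le> f (x - h)"
  shows "D \<le> 0"
proof (rule ccontr)
  assume "\<not> D \<le> 0"
  then obtain d where "0 < d" and inc: "\<And>h. 0 < h \<Longrightarrow> h < d \<Longrightarrow> f (x - h) < f x"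
    using DERIV_pos_inc_left[OF assms(1)] by force
  then have "0 < min d \<delta> / 2" "min d \<delta> / 2 < d" "min d \<delta> / 2 < \<delta>"
    using assms(2) by auto
  then show False
    using inc assms(3) by (meson not_le)
qed

text \<open>Fermat's rule for \<open>f + c \<bar>w + \<cdot>\<bar>\<close>: \<open>-f'(0)\<close> lies in \<open>c\<close> times the subdifferential
  of the absolute value at \<open>w\<close>.\<close>
lemma local_min_abs_subgradient:
  fixes f :: "real \<Rightarrow> real"
  assumes deriv: "(f has_real_derivative D) (at 0)" and \<delta>: "0 < \<delta>"
    and min: "\<And>t. \<bar>t\<bar> < \<delta> \<Longrightarrow> f 0 \<le> f t + c * (\<bar>w + t\<bar> - \<bar>w\<bar>)"
  shows "(0 < w \<longrightarrow> D = - c) \<and> (w < 0 \<longrightarrow> D = c) \<and> (w = 0 \<longrightarrow> \<bar>D\<bar> \<le> c)"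
proof -
  define \<delta>' where "\<delta>' = (if w = 0 then \<delta> else min \<delta> \<bar>w\<bar>)"
  have \<delta>': "0 < \<delta>'" "\<delta>' \<le> \<delta>"
    using \<delta> by (auto simp: \<delta>'_def)
  \<comment> \<open>the one-sided slopes of \<open>t \<mapsto> \<bar>w + t\<bar>\<close> at \<open>0\<close>\<close>
  define \<sigma>r :: real where "\<sigma>r = (if 0 \<le> w then 1 else -1)"
  define \<sigma>l :: real where "\<sigma>l = (if 0 < w then 1 else -1)"
  have "0 \<le> D + c * \<sigma>r"
  proof (rule deriv_nonneg_if_right_local_min[where f = "\<lambda>t. f t + c * \<sigma>r * t"])
    show "((\<lambda>t. f t + c * \<sigma>r * t) has_real_derivative D + c * \<sigma>r) (at 0)"
      by (auto intro!: derivative_eq_intros deriv)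
    fix h
    assume "0 < h" "h < \<delta>'"
    then have "\<bar>w + h\<bar> - \<bar>w\<bar> = \<sigma>r * h"
      by (auto simp: \<sigma>r_def \<delta>'_def split: if_splits)
    then show "f 0 + c * \<sigma>r * 0 \<le> f (0 + h) + c * \<sigma>r * (0 + h)"
      using min[of h] \<open>0 < h\<close> \<open>h < \<delta>'\<close> \<delta>' by simp
  qed (rule \<delta>')
  moreover have "D + c * \<sigma>l \<le> 0"
  proof (rule deriv_nonpos_if_left_local_min[where f = "\<lambda>t. f t + c * \<sigma>l * t"])
    show "((\<lambda>t. f t + c * \<sigma>l * t) has_real_derivative D + c * \<sigma>l) (at 0)"
      by (auto intro!: derivative_eq_intros deriv)
    fix h
    assume "0 < h" "h < \<delta>'"
    then have "\<bar>w + - h\<bar> - \<bar>w\<bar> = - \<sigma>l * h"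
      by (auto simp: \<sigma>l_def \<delta>'_def split: if_splits)
    then show "f 0 + c * \<sigma>l * 0 \<le> f (0 - h) + c * \<sigma>l * (0 - h)"
      using min[of "- h"] \<open>0 < h\<close> \<open>h < \<delta>'\<close> \<delta>' by simp
  qed (rule \<delta>')
  ultimately show ?thesis
    by (auto simp: \<sigma>r_def \<sigma>l_def)
qed

lemma glasso_optimality_conditions:
  fixes S \<Omega> :: "real^'n^'n"
  assumes \<Omega>: "pos_def \<Omega>" and m: "0 < m" and \<Omega>_lo: "loewner_le (m *\<^sub>R mat 1) \<Omega>"
    and S: "sym_mat S"
    and opt: "\<And>\<Omega>'. pos_def \<Omega>' \<Longrightarrow> glasso_obj S lam \<Omega> \<le> glasso_obj S lam \<Omega>'"
  shows "(0 < \<Omega> $ i $ j \<longrightarrow> matrix_inv \<Omega> $ i $ j - S $ i $ j = lam)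
    \<and> (\<Omega> $ i $ j < 0 \<longrightarrow> matrix_inv \<Omega> $ i $ j - S $ i $ j = - lam)
    \<and> (\<Omega> $ i $ j = 0 \<longrightarrow> \<bar>matrix_inv \<Omega> $ i $ j - S $ i $ j\<bar> \<le> lam)"
proof -
  have sym: "sym_mat \<Omega>"
    using \<Omega> by (simp add: pos_def_def)
  define \<kappa> :: real where "\<kappa> = (if i = j then 1 else 2)"
  define \<gamma> where "\<gamma> = matrix_inv \<Omega> $ i $ j"
  define s where "s = S $ i $ j"
  define w where "w = \<Omega> $ i $ j"
  define Dt where "Dt = det \<Omega>"
  have \<kappa>: "0 < \<kappa>"
    by (simp add: \<kappa>_def)
  have Dt: "0 < Dt"
    unfolding Dt_def by (rule det_pos_if_pos_def[OF \<Omega>])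
  obtain c where det_eq: "\<And>t. det (\<Omega> + t *\<^sub>R sym_basis i j) = Dt * (1 + \<kappa> * \<gamma> * t) + c * t\<^sup>2"
    using det_add_sym_basis[OF sym pos_def_invertible[OF \<Omega>], of i j]
    unfolding Dt_def \<kappa>_def \<gamma>_def by blast
  define f where "f t = - ln (Dt * (1 + \<kappa> * \<gamma> * t) + c * t\<^sup>2) / \<kappa> + s * t" for t
  have deriv: "(f has_real_derivative s - \<gamma>) (at 0)"
    unfolding f_def using Dt \<kappa> by (auto intro!: derivative_eq_intros simp: field_simps)
  have "f 0 \<le> f t + lam * (\<bar>w + t\<bar> - \<bar>w\<bar>)" if t: "\<bar>t\<bar> < m / 2" for t
  proof -
    have "glasso_obj S lam \<Omega> \<le> glasso_obj S lam (\<Omega> + t *\<^sub>R sym_basis i j)"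
      by (rule opt[OF pos_def_add_sym_basis[OF sym \<Omega>_lo t]])
    then have "\<kappa> * f 0 \<le> \<kappa> * (f t + lam * (\<bar>w + t\<bar> - \<bar>w\<bar>))"
      unfolding glasso_obj_def det_eq sum_abs_add_sym_basis[OF sym]
      using \<kappa> by (simp add: f_def Dt_def matrix_add_ldistrib trace_add trace_scaleR
          trace_mult_sym_basis[OF S] \<kappa>_def s_def w_def algebra_simps)
    then show ?thesis
      using \<kappa> by simp
  qed
  then have "(0 < w \<longrightarrow> s - \<gamma> = - lam) \<and> (w < 0 \<longrightarrow> s - \<gamma> = lam) \<and> (w = 0 \<longrightarrow> \<bar>s - \<gamma>\<bar> \<le> lam)"
    using m by (intro local_min_abs_subgradient[OF deriv, of "m / 2"]) auto
  then show ?thesis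
    by (auto simp: \<gamma>_def s_def w_def abs_minus_commute)
qed

lemma clip_scalar_fixed:
  fixes g w l \<zeta> :: real
  assumes "(0 < w \<longrightarrow> g = l) \<and> (w < 0 \<longrightarrow> g = - l) \<and> (w = 0 \<longrightarrow> \<bar>g\<bar> \<le> l)"
    and "0 \<le> l" "0 < \<zeta>"
  shows "min (max (g + \<zeta> * w) (- l)) l = g"
proof (cases w "0::real" rule: linorder_cases)
  case less
  then have "\<zeta> * w < 0"
    using assms(3) by (simp add: mult_pos_neg)
  then show ?thesis
    using less assms(1,2) by (auto simp: min_def max_def)
next
  case equal
  then show ?thesis
    using assms(1) by (auto simp: min_def max_def)
next
  case greater
  then have "0 < \<zeta> * w"
    using assms(3) by simp
  then show ?thesis
    using greater assms(1,2) by (auto simp: min_def max_def)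
qed

lemma glasso_fixed_point:
  fixes S \<Omega> :: "real^'n^'n"
  assumes \<Omega>: "pos_def \<Omega>" and m: "0 < m" and \<Omega>_lo: "loewner_le (m *\<^sub>R mat 1) \<Omega>"
    and S: "sym_mat S" and lam: "0 \<le> lam" and \<zeta>: "0 < \<zeta>"
    and opt: "\<And>\<Omega>'. pos_def \<Omega>' \<Longrightarrow> glasso_obj S lam \<Omega> \<le> glasso_obj S lam \<Omega>'"
  shows "opt_step lam \<zeta> S (matrix_inv \<Omega>) = matrix_inv \<Omega>"
proof -
  have "matrix_inv (matrix_inv \<Omega>) = \<Omega>"
    using matrix_inv_matrix_inv pos_def_invertible[OF \<Omega>] by blast
  moreover have "min (max (matrix_inv \<Omega> $ i $ j - S $ i $ j + \<zeta> * \<Omega> $ i $ j) (- lam)) lam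
      = matrix_inv \<Omega> $ i $ j - S $ i $ j" for i j
    using glasso_optimality_conditions[OF \<Omega> m \<Omega>_lo S opt, of i j] lam \<zeta> by (rule clip_scalar_fixed)
  ultimately show ?thesis
    by (simp add: opt_step_def clip_def vec_eq_iff)
qed

section \<open>Unrolling the error recursion\<close>

lemma linear_recurrence_le:
  fixes e u :: "nat \<Rightarrow> real"
  assumes \<beta>: "0 \<le> \<beta>" and step: "\<And>k. k < n \<Longrightarrow> e (Suc k) \<le> \<beta> * e k + u (Suc k)"
  shows "e n \<le> \<beta> ^ n * e 0 + (\<Sum>k=1..n. \<beta> ^ (n - k) * u k)"
  using step
proof (induction n)
  case 0
  then show ?case by simp
next
  case (Suc n)
  have "e (Suc n) \<le> \<beta> * e n + u (Suc n)"
    using Suc.prems by simp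
  also have "\<dots> \<le> \<beta> * (\<beta> ^ n * e 0 + (\<Sum>k=1..n. \<beta> ^ (n - k) * u k)) + u (Suc n)"
    using Suc \<beta> by (simp add: mult_left_mono)
  also have "\<dots> = \<beta> ^ Suc n * e 0 + (\<Sum>k=1..Suc n. \<beta> ^ (Suc n - k) * u k)"
  proof -
    have "(\<Sum>k=1..n. \<beta> ^ (Suc n - k) * u k) = \<beta> * (\<Sum>k=1..n. \<beta> ^ (n - k) * u k)"
      unfolding sum_distrib_left by (rule sum.cong) (auto simp: Suc_diff_le)
    then show ?thesis
      by (simp add: algebra_simps)
  qed
  finally show ?case .
qed

lemma Gam_K:
  "Gam lam \<zeta> K t0 Sl (t0 + d) K = GamK lam \<zeta> K t0 Sl d"
  by (cases d) (simp_all add: Gam_def)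

lemma Gam_0:
  "Gam lam \<zeta> K t0 Sl (t0 + Suc d) 0 = GamK lam \<zeta> K t0 Sl d"
  by (simp add: Gam_def)

lemma Gam_Suc:
  "Gam lam \<zeta> K t0 Sl (t0 + Suc d) (Suc k)
    = opt_step lam \<zeta> (Sl (t0 + Suc d)) (Gam lam \<zeta> K t0 Sl (t0 + Suc d) k)"
  by (simp add: Gam_def)

lemma GamK_Suc_dist_le:
  fixes Sl :: "nat \<Rightarrow> real^'n^'n"
  assumes a: "0 < a" and \<zeta>: "0 \<le> \<zeta>" and K: "1 \<le> K"
    and bounds: "\<And>s k. t0 \<le> s \<Longrightarrow> k \<in> {1..K} \<Longrightarrow>
      loewner_le (a *\<^sub>R mat 1) (Gam lam \<zeta> K t0 Sl s k) \<and> loewner_le (Gam lam \<zeta> K t0 Sl s k) (b *\<^sub>R mat 1)"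
    and Gs: "loewner_le (a *\<^sub>R mat 1) Gs" "loewner_le Gs (b *\<^sub>R mat 1)"
    and fixed: "opt_step lam \<zeta> Ss Gs = Gs"
  shows "norm (GamK lam \<zeta> K t0 Sl (Suc d) - Gs)
    \<le> contraction_rate a b \<zeta> ^ K * norm (GamK lam \<zeta> K t0 Sl d - Gs)
      + 2 * (\<Sum>m=1..K. contraction_rate a b \<zeta> ^ (K - m)) * norm (Sl (t0 + Suc d) - Ss)"
proof -
  let ?\<beta> = "contraction_rate a b \<zeta>"
  let ?G = "Gam lam \<zeta> K t0 Sl (t0 + Suc d)"
  have "norm (?G (Suc k) - Gs) \<le> ?\<beta> * norm (?G k - Gs) + 2 * norm (Sl (t0 + Suc d) - Ss)"
    if "k < K" for k
  proof -
    have "loewner_le (a *\<^sub>R mat 1) (?G k) \<and> loewner_le (?G k) (b *\<^sub>R mat 1)"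
    proof (cases k)
      case 0
      have "?G 0 = Gam lam \<zeta> K t0 Sl (t0 + d) K"
        by (simp only: Gam_0 Gam_K)
      then show ?thesis
        using 0 bounds[of "t0 + d" K] K by simp
    next
      case Suc
      then show ?thesis
        using bounds[of "t0 + Suc d" k] that by simp
    qed
    then show ?thesis
      unfolding Gam_Suc using opt_step_dist_le[OF a \<zeta> _ _ Gs fixed] by blast
  qed
  then have "norm (?G K - Gs)
      \<le> ?\<beta> ^ K * norm (?G 0 - Gs) + (\<Sum>m=1..K. ?\<beta> ^ (K - m) * (2 * norm (Sl (t0 + Suc d) - Ss)))"
    by (intro linear_recurrence_le) (simp_all add: contraction_rate_def)
  moreover have "?G K = GamK lam \<zeta> K t0 Sl (Suc d)" "?G 0 = GamK lam \<zeta> K t0 Sl d"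
    by (rule Gam_K, rule Gam_0)
  ultimately show ?thesis
    by (simp add: sum_distrib_left mult_ac)
qed

lemma Gam_dist_le:
  fixes Sl :: "nat \<Rightarrow> real^'n^'n"
  assumes a: "0 < a" and \<zeta>: "0 \<le> \<zeta>" and K: "1 \<le> K"
    and bounds: "\<And>s k. t0 \<le> s \<Longrightarrow> k \<in> {1..K} \<Longrightarrow>
      loewner_le (a *\<^sub>R mat 1) (Gam lam \<zeta> K t0 Sl s k) \<and> loewner_le (Gam lam \<zeta> K t0 Sl s k) (b *\<^sub>R mat 1)"
    and Gs: "loewner_le (a *\<^sub>R mat 1) Gs" "loewner_le Gs (b *\<^sub>R mat 1)"
    and fixed: "opt_step lam \<zeta> Ss Gs = Gs"
    and t: "t0 \<le> t"
  shows "norm (Gam lam \<zeta> K t0 Sl t K - Gs)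
    \<le> contraction_rate a b \<zeta> ^ (K * (t - t0)) * norm (Gam lam \<zeta> K t0 Sl t0 K - Gs)
      + 2 * (\<Sum>m=1..K. contraction_rate a b \<zeta> ^ (K - m) *
          (\<Sum>l=t0+1..t. contraction_rate a b \<zeta> ^ (K * (t - l)) * norm (Sl l - Ss)))"
proof -
  let ?\<beta> = "contraction_rate a b \<zeta>"
  let ?P = "\<Sum>m=1..K. ?\<beta> ^ (K - m)"
  let ?g = "\<lambda>l. norm (Sl l - Ss)"
  obtain d where d: "t = t0 + d"
    using t le_Suc_ex by blast
  have "norm (GamK lam \<zeta> K t0 Sl d - Gs)
      \<le> (?\<beta> ^ K) ^ d * norm (GamK lam \<zeta> K t0 Sl 0 - Gs)
        + (\<Sum>k=1..d. (?\<beta> ^ K) ^ (d - k) * (2 * ?P * ?g (t0 + k)))"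
    using GamK_Suc_dist_le[OF a \<zeta> K bounds Gs fixed]
    by (intro linear_recurrence_le) (simp_all add: contraction_rate_def)
  also have "(\<Sum>k=1..d. (?\<beta> ^ K) ^ (d - k) * (2 * ?P * ?g (t0 + k)))
      = 2 * ?P * (\<Sum>l=t0+1..t. ?\<beta> ^ (K * (t - l)) * ?g l)"
  proof -
    have "(\<Sum>l=t0+1..t. ?\<beta> ^ (K * (t - l)) * ?g l)
        = (\<Sum>k=1..d. ?\<beta> ^ (K * (t - (k + t0))) * ?g (k + t0))"
      using sum.shift_bounds_cl_nat_ivl[of "\<lambda>l. ?\<beta> ^ (K * (t - l)) * ?g l" 1 t0 d]
      by (simp add: d add.commute)
    also have "\<dots> = (\<Sum>k=1..d. (?\<beta> ^ K) ^ (d - k) * ?g (t0 + k))"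
      by (simp add: d power_mult add.commute)
    finally show ?thesis
      by (simp add: sum_distrib_left mult_ac)
  qed
  finally show ?thesis
    using Gam_K[of lam \<zeta> K t0 Sl d] Gam_K[of lam \<zeta> K t0 Sl 0]
    by (simp add: d power_mult sum_distrib_right mult_ac)
qed

theorem theorem1:
  fixes M :: "'w measure"
    and X :: "nat \<Rightarrow> 'w \<Rightarrow> real^'p::finite"
    and Sstar :: "'p mat"
    and adj :: "'n::finite \<Rightarrow> 'n \<Rightarrow> bool"
    and meas :: "'n \<Rightarrow> 'p \<Rightarrow> bool"
    and W K t0 t :: nat
    and lam zeta a b :: real
    and \<Omega>star :: "'p mat"
    and \<omega> :: 'w
    and i :: 'n
  assumes prob: "prob_space M"
    and Sstar_pd: "pos_def Sstar"
    and X_rv: "\<And>s. s \<ge> 1 \<Longrightarrow> X s \<in> borel_measurable M"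
    and X_indep: "prob_space.indep_vars M (\<lambda>_. borel) X {1..}"
    and X_gauss: "\<And>s. s \<ge> 1 \<Longrightarrow> distributed M lborel (X s) (\<lambda>x. ennreal (gauss_density Sstar x))"
    and graph: "conn_undirected_graph adj"
    and W_pos: "W \<ge> 1" and K_pos: "K \<ge> 1" and t0_pos: "t0 \<ge> 1"
    and lam_pos: "lam > 0"
    and Omega_pd: "pos_def \<Omega>star"
    and Omega_min: "\<And>\<Omega>. pos_def \<Omega> \<Longrightarrow> glasso_obj Sstar lam \<Omega>star \<le> glasso_obj Sstar lam \<Omega>"
    and ab: "0 < a" "a < b"
    and zeta_pos: "zeta > 0"
    and \<omega>_in: "\<omega> \<in> space M"
    and iter_bounds: "\<And>j s k. s \<ge> t0 \<Longrightarrow> k \<in> {1..K} \<Longrightarrow>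
           loewner_le (a *\<^sub>R mat 1)
             (Gam lam zeta K t0 (\<lambda>l. SW adj meas W (\<lambda>l. X l \<omega>) l j) s k)
         \<and> loewner_le (Gam lam zeta K t0 (\<lambda>l. SW adj meas W (\<lambda>l. X l \<omega>) l j) s k)
             (b *\<^sub>R mat 1)"
    and Gstar_bounds: "loewner_le (a *\<^sub>R mat 1) (matrix_inv \<Omega>star)"
                      "loewner_le (matrix_inv \<Omega>star) (b *\<^sub>R mat 1)"
    and t_ge: "t \<ge> t0"
  shows "let \<beta> = max \<bar>1 - zeta / a^2\<bar> \<bar>1 - zeta / b^2\<bar>;
             Sl = (\<lambda>l. SW adj meas W (\<lambda>l. X l \<omega>) l i);
             \<Gamma>star = matrix_inv \<Omega>star
         in frob_norm (Gam lam zeta K t0 Sl t K - \<Gamma>star)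
            \<le> \<beta> ^ (K * (t - t0)) * frob_norm (Gam lam zeta K t0 Sl t0 K - \<Gamma>star)
              + 2 * (\<Sum>m=1..K. \<beta> ^ (K - m) *
                       (\<Sum>l=t0+1..t. \<beta> ^ (K * (t - l)) * frob_norm (Sl l - Sstar)))"
proof -
  have "loewner_le ((1 / b) *\<^sub>R mat 1) \<Omega>star"
    using matrix_inv_loewner_bounds[OF ab(1) Gstar_bounds]
    by (simp add: matrix_inv_matrix_inv pos_def_invertible[OF Omega_pd])
  then have fixed: "opt_step lam zeta Sstar (matrix_inv \<Omega>star) = matrix_inv \<Omega>star"
    using Sstar_pd ab lam_pos zeta_pos Omega_min
    by (intro glasso_fixed_point[OF Omega_pd]) (simp_all add: pos_def_def)
  show ?thesis
    using Gam_dist_le[OF ab(1) _ K_pos iter_bounds Gstar_bounds fixed t_ge] zeta_pos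
    by (simp add: Let_def frob_norm_eq_norm contraction_rate_def)
qed

end
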